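(* Let $T$ and $B$ be two flat-foldable developable degree-4 single-vertex creased papers sharing two panels, so that they share one inner crease $c$ (the crease joining the two vertices); this union is called a unit. Let $\alpha_1,\alpha_2\in(0,\pi)$ be the sector angles of $T$ adjacent to $c$ and $\alpha_3,\alpha_4\in(0,\pi)$ the sector angles of $B$ adjacent to $c$, with $\alpha_1,\alpha_2$ not both equal to $\pi/2$ and $\alpha_3,\alpha_4$ not both equal to $\pi/2$. Suppose the unit folds rigidly over a closed interval of the common folding angle $\rho$ of $c$ containing more than one point, each vertex moving along one of its two branches (described in the context). For each vertex, the two inner creases adjacent to $c$ lie on the two sides of $c$; call the creases of $T$ and $B$ lying on the same side of $c$ "corresponding". Then the folding angles of corresponding creases of $T$ and $B$ are equal up to sign throughout the interval (i.e. $\rho_2\equiv\pm\rho_5$ and $\rho_4\equiv\pm\rho_7$, where $\rho_2,\rho_4$ are the side folding angles of $T$ and $\rho_5,\rho_7$ the corresponding ones of $B$) if and only if one of the following holds: (i) both $T$ and $B$ move along branch 1, and $$\frac{\tan\frac{\alpha_1}{2}}{\tan\frac{\alpha_2}{2}}=\frac{\tan\frac{\alpha_3}{2}}{\tan\frac{\alpha_4}{2}}\quad\text{or}\quad \frac{\tan\frac{\alpha_1}{2}}{\tan\frac{\alpha_2}{2}}=\frac{\tan\frac{\alpha_4}{2}}{\tan\frac{\alpha_3}{2}};$$ (ii) both $T$ and $B$ move along branch 2, and $$\tan\tfrac{\alpha_1}{2}\tan\tfrac{\alpha_2}{2}=\tan\tfrac{\alpha_3}{2}\tan\tfrac{\alpha_4}{2}\quad\text{or}\quad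 \tan\tfrac{\alpha_1}{2}\tan\tfrac{\alpha_2}{2}\tan\tfrac{\alpha_3}{2}\tan\tfrac{\alpha_4}{2}=1.$$ In particular, the condition can never hold when one vertex moves along branch 1 and the other along branch 2.
   Context: A developable degree-4 single-vertex creased paper consists of four rigid planar panels around a vertex, with sector angles summing to $2\pi$, hinged along four inner creases; a rigid folding motion assigns to each crease a signed folding angle (0 = unfolded, sign = mountain/valley), the folding angle of a crease being intrinsic to that crease. It is flat-foldable if opposite sector angles sum to $\pi$. For a flat-foldable vertex with sector angles $\beta_1,\beta_2,\beta_3,\beta_4$ in cyclic order, $\beta_1+\beta_3=\pi$, $\beta_2+\beta_4=\pi$, $\beta_1,\beta_2\in(0,\pi)$ not both $\pi/2$, and creases $c_1$ (between $\beta_1,\beta_2$), $c_2$ (between $\beta_2,\beta_3$), $c_3$ (between $\beta_3,\beta_4$), $c_4$ (between $\beta_4,\beta_1$) with folding angles $\rho_1,\dots,\rho_4$, its rigid folding motions lie on two branches: Branch 1: $\tan\frac{\rho_2}{2}=\frac{\sin\frac{\beta_2-\beta_1}{2}}{\sin\frac{\beta_2+\beta_1}{2}}\tan\frac{\rho_1}{2}$, $\rho_3=\rho_1$, $\rho_4=-\rho_2$. Branch 2: $\tan\frac{\rho_2}{2}=-\frac{\cos\frac{\beta_2-\beta_1}{2}}{\cos\frac{\beta_2+\beta_1}{2}}\tan\frac{\rho_1}{2}$, $\rho_3=-\rho_1$, $\rho_4=\rho_2$. In the claim these are applied to each of $T$ and $B$ with $c_1$ taken to be the shared crease $c$ (so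 $(\beta_1,\beta_2)=(\alpha_1,\alpha_2)$ for $T$ and $(\alpha_3,\alpha_4)$ for $B$), the side creases being $c_2$ and $c_4$ of each vertex. *)

theory Defs
  imports Complex_Main
begin

text \<open>A developable flat-foldable degree-4 vertex with sector angles b1, b2, b3, b4
  in cyclic order (c1 between b1 and b2).\<close>
definition flat_foldable_vertex :: "real \<Rightarrow> real \<Rightarrow> real \<Rightarrow> real \<Rightarrow> bool" where
  "flat_foldable_vertex b1 b2 b3 b4 \<longleftrightarrow>
     0 < b1 \<and> b1 < pi \<and> 0 < b2 \<and> b2 < pi \<and> 0 < b3 \<and> 0 < b4 \<and>
     b1 + b2 + b3 + b4 = 2 * pi \<and> b1 + b3 = pi \<and> b2 + b4 = pi \<and>
     \<not> (b1 = pi / 2 \<and> b2 = pi / 2)"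

text \<open>Branch equations (context), with the denominators cleared:
  folding angles r1..r4 of creases c1..c4 of a flat-foldable vertex whose sector
  angles adjacent to c1 are b1, b2.\<close>
definition branch1 :: "real \<Rightarrow> real \<Rightarrow> real \<Rightarrow> real \<Rightarrow> real \<Rightarrow> real \<Rightarrow> bool" where
  "branch1 b1 b2 r1 r2 r3 r4 \<longleftrightarrow>
     tan (r2 / 2) * sin ((b2 + b1) / 2) = sin ((b2 - b1) / 2) * tan (r1 / 2) \<and>
     r3 = r1 \<and> r4 = - r2"

definition branch2 :: "real \<Rightarrow> real \<Rightarrow> real \<Rightarrow> real \<Rightarrow> real \<Rightarrow> real \<Rightarrow> bool" where
  "branch2 b1 b2 r1 r2 r3 r4 \<longleftrightarrow>
     tan (r2 / 2) * cos ((b2 + b1) / 2) = - cos ((b2 - b1) / 2) * tan (r1 / 2) \<and>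
     r3 = - r1 \<and> r4 = r2"

definition on_branch :: "nat \<Rightarrow> real \<Rightarrow> real \<Rightarrow> real \<Rightarrow> real \<Rightarrow> real \<Rightarrow> real \<Rightarrow> bool" where
  "on_branch k b1 b2 r1 r2 r3 r4 \<longleftrightarrow>
     (k = 1 \<and> branch1 b1 b2 r1 r2 r3 r4) \<or> (k = 2 \<and> branch2 b1 b2 r1 r2 r3 r4)"

end

theory Submission
  imports Defs
begin

text \<open>In the half-angle tangents of its sector angles, each branch of a flat-foldable vertex
  makes \<open>tan (\<rho>\<^sub>2/2)\<close> a constant multiple \<open>K\<close> of \<open>tan (\<rho>\<^sub>1/2)\<close>, while \<open>\<rho>\<^sub>4 = \<plusminus>\<rho>\<^sub>2\<close> with a
  sign fixed by the branch.  As \<open>t \<mapsto> tan (t/2)\<close> is injective on \<open>(-\<pi>, \<pi>)\<close>, the creases \<open>c\<^sub>2\<close>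
  of \<open>T\<close> and \<open>B\<close> agree up to sign throughout the interval exactly when their coefficients
  agree up to sign, and then so do the creases \<open>c\<^sub>4\<close> as soon as both vertices move on the
  same branch.  That is forced: \<open>\<bar>K\<bar> < 1\<close> on branch 1 and \<open>\<bar>K\<bar> > 1\<close> on branch 2.  Comparing
  the coefficients on a common branch is then elementary algebra.\<close>

lemma tan_half_inj:
  assumes "-pi < u" "u < pi" "-pi < v" "v < pi" "tan (u/2) = tan (v/2)"
  shows "u = v"
proof -
  have "arctan (tan (u/2)) = u/2"
    by (rule arctan_tan) (use assms in linarith)+
  moreover have "arctan (tan (v/2)) = v/2"
    by (rule arctan_tan) (use assms in linarith)+
  ultimately show ?thesis
    using assms(5) by (metis field_sum_of_halves)
qed

lemma exists_tan_half_nonzero: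
  assumes "-pi < a" "a < b" "b < pi"
  shows "\<exists>t\<in>{a..b}. tan (t/2) \<noteq> 0"
proof -
  define t where "t = (if b = 0 then a else b)"
  have "t \<in> {a..b}" "t \<noteq> 0" "-pi < t" "t < pi"
    unfolding t_def using assms by auto
  moreover from this have "tan (t/2) \<noteq> 0"
    using tan_half_inj[of t 0] by auto
  ultimately show ?thesis
    by blast
qed

lemma sin_diff_div_sin_add_eq_tan:
  fixes x y :: real
  assumes "cos x \<noteq> 0" "cos y \<noteq> 0"
  shows "sin (y - x) / sin (y + x) = (tan y - tan x) / (tan y + tan x)"
  using add_tan_eq[of y x] add_tan_eq[of y "-x"] assms by simp

lemma cos_diff_div_cos_add_eq_tan:
  fixes x y :: real
  assumes "cos x \<noteq> 0" "cos y \<noteq> 0"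
  shows "cos (y - x) / cos (y + x) = (1 + tan x * tan y) / (1 - tan x * tan y)"
  using lemma_tan_add1[of x y] lemma_tan_add1[of "-x" y] assms by (simp add: add.commute)

text \<open>The coefficient \<open>K\<close> of branch \<open>k\<close> for \<open>x = tan (\<beta>\<^sub>1/2)\<close>, \<open>y = tan (\<beta>\<^sub>2/2)\<close>; on branch 2 it
  only has this meaning when \<open>\<beta>\<^sub>1 + \<beta>\<^sub>2 \<noteq> \<pi>\<close>, i.e. \<open>x y \<noteq> 1\<close>.\<close>
definition branch_ratio :: "nat \<Rightarrow> real \<Rightarrow> real \<Rightarrow> real" where
  "branch_ratio k x y = (if k = 1 then (y - x) / (y + x) else - ((1 + x * y) / (1 - x * y)))"

lemma on_branch2_tan_half_mult_ne_one:
  assumes "0 < b1" "b1 < pi" "0 < b2" "b2 < pi"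
    and "on_branch 2 b1 b2 t r2 r3 r4" "tan (t/2) \<noteq> 0"
  shows "tan (b1/2) * tan (b2/2) \<noteq> 1"
proof
  assume "tan (b1/2) * tan (b2/2) = 1"
  moreover have "cos (b1/2) \<noteq> 0" "cos (b2/2) \<noteq> 0"
    using cos_gt_zero_pi[of "b1/2"] cos_gt_zero_pi[of "b2/2"] assms by auto
  ultimately have "cos ((b2 + b1)/2) = 0"
    using lemma_tan_add1[of "b2/2" "b1/2"] by (simp add: add_divide_distrib mult.commute)
  then have "cos ((b2 - b1)/2) * tan (t/2) = 0"
    using assms(5) unfolding on_branch_def branch2_def by simp
  moreover have "cos ((b2 - b1)/2) > 0"
    using assms by (intro cos_gt_zero_pi) auto
  ultimately show False
    using assms(6) by simp
qed

lemma on_branch_side_crease: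
  assumes "on_branch k b1 b2 t r2 r3 r4"
  shows "r4 = (if k = 1 then - r2 else r2)"
  using assms unfolding on_branch_def branch1_def branch2_def by auto

lemma on_branch_tan_half:
  assumes "0 < b1" "b1 < pi" "0 < b2" "b2 < pi"
    and "on_branch k b1 b2 t r2 r3 r4"
    and "k = 2 \<Longrightarrow> tan (b1/2) * tan (b2/2) \<noteq> 1"
  shows "tan (r2/2) = branch_ratio k (tan (b1/2)) (tan (b2/2)) * tan (t/2)"
proof -
  have cos_half: "cos (b1/2) \<noteq> 0" "cos (b2/2) \<noteq> 0"
    using cos_gt_zero_pi[of "b1/2"] cos_gt_zero_pi[of "b2/2"] assms by auto
  have halves: "(b2 - b1)/2 = b2/2 - b1/2" "(b2 + b1)/2 = b2/2 + b1/2"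
    by simp_all
  consider "k = 1" "branch1 b1 b2 t r2 r3 r4" | "k = 2" "branch2 b1 b2 t r2 r3 r4"
    using assms(5) unfolding on_branch_def by blast
  then show ?thesis
  proof cases
    case 1
    have "sin ((b2 + b1)/2) > 0"
      using assms by (intro sin_gt_zero) auto
    with 1 have "tan (r2/2) = sin ((b2 - b1)/2) / sin ((b2 + b1)/2) * tan (t/2)"
      unfolding branch1_def by (simp add: field_simps)
    with 1 show ?thesis
      using sin_diff_div_sin_add_eq_tan[OF cos_half] unfolding branch_ratio_def halves by simp
  next
    case 2
    have "cos (b1/2 + b2/2) \<noteq> 0"
      using lemma_tan_add1[OF cos_half] 2 assms(6) by auto
    then have "cos ((b2 + b1)/2) \<noteq> 0"
      by (simp add: add_divide_distrib add.commute)
    with 2 have "tan (r2/2) = - (cos ((b2 - b1)/2) / cos ((b2 + b1)/2)) * tan (t/2)"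
      unfolding branch2_def by (simp add: field_simps)
    with 2 show ?thesis
      using cos_diff_div_cos_add_eq_tan[OF cos_half]
      unfolding branch_ratio_def halves by (simp add: minus_divide_left)
  qed
qed

lemma flat_foldable_motion:
  assumes "flat_foldable_vertex b1 b2 (pi - b1) (pi - b2)"
    and "\<forall>t\<in>S. on_branch k b1 b2 t (r2 t) (r3 t) (r4 t)"
    and "t0 \<in> S" "tan (t0/2) \<noteq> 0"
  shows "tan (b1/2) > 0" "tan (b2/2) > 0"
    and "k = 2 \<Longrightarrow> tan (b1/2) * tan (b2/2) \<noteq> 1"
    and "\<forall>t\<in>S. tan (r2 t/2) = branch_ratio k (tan (b1/2)) (tan (b2/2)) * tan (t/2)"
    and "\<forall>t\<in>S. r4 t = (if k = 1 then - r2 t else r2 t)"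
proof -
  have angles: "0 < b1" "b1 < pi" "0 < b2" "b2 < pi"
    using assms(1) unfolding flat_foldable_vertex_def by auto
  then show "tan (b1/2) > 0" "tan (b2/2) > 0"
    by (simp_all add: tan_gt_zero)
  show nondegenerate: "k = 2 \<Longrightarrow> tan (b1/2) * tan (b2/2) \<noteq> 1"
    using on_branch2_tan_half_mult_ne_one[OF angles _ assms(4)] assms(2,3) by blast
  show "\<forall>t\<in>S. tan (r2 t/2) = branch_ratio k (tan (b1/2)) (tan (b2/2)) * tan (t/2)"
    using on_branch_tan_half[OF angles _ nondegenerate] assms(2) by blast
  show "\<forall>t\<in>S. r4 t = (if k = 1 then - r2 t else r2 t)"
    using on_branch_side_crease assms(2) by blast
qed

lemma tan_half_proportional_eq_pm_iff:
  fixes f g h :: "real \<Rightarrow> real"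
  assumes range: "\<forall>t\<in>S. -pi < f t \<and> f t < pi \<and> -pi < g t \<and> g t < pi"
    and f: "\<forall>t\<in>S. tan (f t/2) = K * h t" and g: "\<forall>t\<in>S. tan (g t/2) = L * h t"
    and "t0 \<in> S" "h t0 \<noteq> 0"
  shows "((\<forall>t\<in>S. f t = g t) \<or> (\<forall>t\<in>S. f t = - g t)) \<longleftrightarrow> (K = L \<or> K = - L)"
proof
  assume "(\<forall>t\<in>S. f t = g t) \<or> (\<forall>t\<in>S. f t = - g t)"
  then have "f t0 = g t0 \<or> f t0 = - g t0"
    using \<open>t0 \<in> S\<close> by blast
  then have "K * h t0 = L * h t0 \<or> K * h t0 = - L * h t0"
    using f g \<open>t0 \<in> S\<close> by (metis minus_divide_left mult_minus_left tan_minus)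
  then show "K = L \<or> K = - L"
    using \<open>h t0 \<noteq> 0\<close> by (metis mult_cancel_right mult_minus_left)
next
  assume "K = L \<or> K = - L"
  then show "(\<forall>t\<in>S. f t = g t) \<or> (\<forall>t\<in>S. f t = - g t)"
  proof
    assume "K = L"
    then have "\<forall>t\<in>S. tan (f t/2) = tan (g t/2)"
      using f g by simp
    then show ?thesis
      using range tan_half_inj by blast
  next
    assume "K = - L"
    then have "\<forall>t\<in>S. tan (f t/2) = tan (- g t/2)"
      using f g by simp
    then show ?thesis
      using range tan_half_inj[of "f _" "- g _"] by force
  qed
qed

lemma diff_div_add_eq_pm_iff:
  fixes x y z w :: real
  assumes "x > 0" "y > 0" "z > 0" "w > 0"
  shows "((y - x)/(y + x) = (w - z)/(w + z) \<or> (y - x)/(y + x) = - ((w - z)/(w + z)))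
    \<longleftrightarrow> (x/y = z/w \<or> x/y = w/z)"
proof -
  have "(y - x)/(y + x) = (w - z)/(w + z) \<longleftrightarrow> (y - x) * (w + z) = (w - z) * (y + x)"
    using assms by (simp add: frac_eq_eq)
  also have "\<dots> \<longleftrightarrow> x * w = z * y"
    by algebra
  also have "\<dots> \<longleftrightarrow> x/y = z/w"
    using assms by (simp add: frac_eq_eq)
  finally have same: "(y - x)/(y + x) = (w - z)/(w + z) \<longleftrightarrow> x/y = z/w" .
  have "- ((w - z)/(w + z)) = (z - w)/(w + z)"
    by (simp add: minus_divide_left)
  then have "(y - x)/(y + x) = - ((w - z)/(w + z)) \<longleftrightarrow> (y - x) * (w + z) = (z - w) * (y + x)"
    using assms by (simp add: frac_eq_eq)
  also have "\<dots> \<longleftrightarrow> x * z = w * y"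
    by algebra
  also have "\<dots> \<longleftrightarrow> x/y = w/z"
    using assms by (simp add: frac_eq_eq)
  finally have opposite: "(y - x)/(y + x) = - ((w - z)/(w + z)) \<longleftrightarrow> x/y = w/z" .
  show ?thesis
    using same opposite by blast
qed

lemma one_add_div_one_diff_eq_pm_iff:
  fixes p q :: real
  assumes "p \<noteq> 1" "q \<noteq> 1"
  shows "((1 + p)/(1 - p) = (1 + q)/(1 - q) \<or> (1 + p)/(1 - p) = - ((1 + q)/(1 - q)))
    \<longleftrightarrow> (p = q \<or> p * q = 1)"
proof -
  have "(1 + p)/(1 - p) = (1 + q)/(1 - q) \<longleftrightarrow> (1 + p) * (1 - q) = (1 + q) * (1 - p)"
    using assms by (simp add: frac_eq_eq)
  also have "\<dots> \<longleftrightarrow> p = q"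
    by algebra
  finally have same: "(1 + p)/(1 - p) = (1 + q)/(1 - q) \<longleftrightarrow> p = q" .
  have "- ((1 + q)/(1 - q)) = (1 + q)/(q - 1)"
    by (simp add: minus_divide_right)
  then have "(1 + p)/(1 - p) = - ((1 + q)/(1 - q)) \<longleftrightarrow> (1 + p) * (q - 1) = (1 + q) * (1 - p)"
    using assms by (simp add: frac_eq_eq)
  also have "\<dots> \<longleftrightarrow> p * q = 1"
    by algebra
  finally have opposite: "(1 + p)/(1 - p) = - ((1 + q)/(1 - q)) \<longleftrightarrow> p * q = 1" .
  show ?thesis
    using same opposite by blast
qed

lemma abs_diff_div_add_lt_one:
  fixes x y :: real
  assumes "x > 0" "y > 0"
  shows "\<bar>(y - x)/(y + x)\<bar> < 1"
  using assms by (simp add: abs_less_iff field_simps)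

lemma abs_one_add_div_one_diff_gt_one:
  fixes p :: real
  assumes "p > 0" "p \<noteq> 1"
  shows "\<bar>(1 + p)/(1 - p)\<bar> > 1"
  using assms by (cases "p < 1") (auto simp: abs_if field_simps)

lemma branch_ratio_eq_pm_iff:
  fixes x1 x2 x3 x4 :: real
  assumes pos: "x1 > 0" "x2 > 0" "x3 > 0" "x4 > 0"
    and branches: "k \<in> {1, 2}" "l \<in> {1, 2}"
    and "k = 2 \<Longrightarrow> x1 * x2 \<noteq> 1" "l = 2 \<Longrightarrow> x3 * x4 \<noteq> 1"
  shows "(branch_ratio k x1 x2 = branch_ratio l x3 x4 \<or> branch_ratio k x1 x2 = - branch_ratio l x3 x4)
    \<longleftrightarrow> ((k = 1 \<and> l = 1 \<and> (x1/x2 = x3/x4 \<or> x1/x2 = x4/x3)) \<or>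
         (k = 2 \<and> l = 2 \<and> (x1 * x2 = x3 * x4 \<or> x1 * x2 * x3 * x4 = 1)))"
proof -
  have branch1_small: "\<bar>branch_ratio 1 x y\<bar> < 1" if "x > 0" "y > 0" for x y
    using abs_diff_div_add_lt_one[OF that] by (simp add: branch_ratio_def)
  have branch2_large: "\<bar>branch_ratio 2 x y\<bar> > 1" if "x > 0" "y > 0" "x * y \<noteq> 1" for x y
    using abs_one_add_div_one_diff_gt_one[of "x * y"] that by (simp add: branch_ratio_def)
  consider "k = 1" "l = 1" | "k = 2" "l = 2" | "k = 1" "l = 2" | "k = 2" "l = 1"
    using branches by auto
  then show ?thesis
  proof cases
    case 1
    then show ?thesis
      using diff_div_add_eq_pm_iff[OF pos] by (simp add: branch_ratio_def)
  next
    case 2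
    then show ?thesis
      using one_add_div_one_diff_eq_pm_iff[of "x1 * x2" "x3 * x4"] assms(7,8)
      by (auto simp: branch_ratio_def mult.assoc minus_equation_iff)
  next
    case 3
    then have "\<bar>branch_ratio k x1 x2\<bar> < \<bar>branch_ratio l x3 x4\<bar>"
      using branch1_small[of x1 x2] branch2_large[of x3 x4] pos assms(8) by simp
    with 3 show ?thesis
      by auto
  next
    case 4
    then have "\<bar>branch_ratio l x3 x4\<bar> < \<bar>branch_ratio k x1 x2\<bar>"
      using branch1_small[of x3 x4] branch2_large[of x1 x2] pos assms(7) by simp
    with 4 show ?thesis
      by auto
  qed
qed

theorem mainTheorem2:
  fixes \<alpha>1 \<alpha>2 \<alpha>3 \<alpha>4 a b :: real
    and \<rho>2 \<rho>3 \<rho>4 \<rho>5 \<rho>6 \<rho>7 :: "real \<Rightarrow> real"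
    and kT kB :: nat
  assumes T_vertex: "flat_foldable_vertex \<alpha>1 \<alpha>2 (pi - \<alpha>1) (pi - \<alpha>2)"
    and B_vertex: "flat_foldable_vertex \<alpha>3 \<alpha>4 (pi - \<alpha>3) (pi - \<alpha>4)"
    and interval: "-pi < a" "a < b" "b < pi"
    and branches: "kT \<in> {1, 2}" "kB \<in> {1, 2}"
    and range: "\<forall>t\<in>{a..b}. \<forall>r\<in>{\<rho>2 t, \<rho>3 t, \<rho>4 t, \<rho>5 t, \<rho>6 t, \<rho>7 t}. -pi < r \<and> r < pi"
    and T_motion: "\<forall>t\<in>{a..b}. on_branch kT \<alpha>1 \<alpha>2 t (\<rho>2 t) (\<rho>3 t) (\<rho>4 t)"
    and B_motion: "\<forall>t\<in>{a..b}. on_branch kB \<alpha>3 \<alpha>4 t (\<rho>5 t) (\<rho>6 t) (\<rho>7 t)"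
  shows "(((\<forall>t\<in>{a..b}. \<rho>2 t = \<rho>5 t) \<or> (\<forall>t\<in>{a..b}. \<rho>2 t = - \<rho>5 t)) \<and>
          ((\<forall>t\<in>{a..b}. \<rho>4 t = \<rho>7 t) \<or> (\<forall>t\<in>{a..b}. \<rho>4 t = - \<rho>7 t)))
    \<longleftrightarrow>
     ((kT = 1 \<and> kB = 1 \<and>
        (tan (\<alpha>1/2) / tan (\<alpha>2/2) = tan (\<alpha>3/2) / tan (\<alpha>4/2) \<or>
         tan (\<alpha>1/2) / tan (\<alpha>2/2) = tan (\<alpha>4/2) / tan (\<alpha>3/2))) \<or>
      (kT = 2 \<and> kB = 2 \<and>
        (tan (\<alpha>1/2) * tan (\<alpha>2/2) = tan (\<alpha>3/2) * tan (\<alpha>4/2) \<or>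
         tan (\<alpha>1/2) * tan (\<alpha>2/2) * tan (\<alpha>3/2) * tan (\<alpha>4/2) = 1)))"
proof -
  obtain t0 where t0: "t0 \<in> {a..b}" "tan (t0/2) \<noteq> 0"
    using exists_tan_half_nonzero[OF interval] by blast
  note T = flat_foldable_motion[OF T_vertex T_motion t0]
  note B = flat_foldable_motion[OF B_vertex B_motion t0]
  let ?KT = "branch_ratio kT (tan (\<alpha>1/2)) (tan (\<alpha>2/2))"
  let ?KB = "branch_ratio kB (tan (\<alpha>3/2)) (tan (\<alpha>4/2))"
  have c2_creases: "((\<forall>t\<in>{a..b}. \<rho>2 t = \<rho>5 t) \<or> (\<forall>t\<in>{a..b}. \<rho>2 t = - \<rho>5 t))
      \<longleftrightarrow> (?KT = ?KB \<or> ?KT = - ?KB)"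
    using range by (intro tan_half_proportional_eq_pm_iff[OF _ T(4) B(4) t0]) auto
  have c4_creases: "(\<forall>t\<in>{a..b}. \<rho>4 t = \<rho>7 t) \<or> (\<forall>t\<in>{a..b}. \<rho>4 t = - \<rho>7 t)"
    if "kT = kB" "(\<forall>t\<in>{a..b}. \<rho>2 t = \<rho>5 t) \<or> (\<forall>t\<in>{a..b}. \<rho>2 t = - \<rho>5 t)"
    using that T(5) B(5) by auto
  have "(?KT = ?KB \<or> ?KT = - ?KB) \<longleftrightarrow>
     ((kT = 1 \<and> kB = 1 \<and>
        (tan (\<alpha>1/2) / tan (\<alpha>2/2) = tan (\<alpha>3/2) / tan (\<alpha>4/2) \<or>
         tan (\<alpha>1/2) / tan (\<alpha>2/2) = tan (\<alpha>4/2) / tan (\<alpha>3/2))) \<or>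
      (kT = 2 \<and> kB = 2 \<and>
        (tan (\<alpha>1/2) * tan (\<alpha>2/2) = tan (\<alpha>3/2) * tan (\<alpha>4/2) \<or>
         tan (\<alpha>1/2) * tan (\<alpha>2/2) * tan (\<alpha>3/2) * tan (\<alpha>4/2) = 1)))"
    by (rule branch_ratio_eq_pm_iff[OF T(1,2) B(1,2) branches T(3) B(3)])
  then show ?thesis
    using c2_creases c4_creases by blast
qed

end
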